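(* Let $Q$ be a connected conjunctive query without self-joins such that $Q$ contains no free sequence and the renamed query of $Q$ contains no nested clique. Then $Q$ has the head-domination property.
   Context: A conjunctive query (CQ) without self-joins is $Q(\mathbf{A}) :- R_1(\mathbb{A}_1), \ldots, R_m(\mathbb{A}_m)$ with pairwise distinct relation symbols, $\mathrm{attr}(R_i)=\mathbb{A}_i$, $\mathrm{attr}(Q)=\bigcup_i\mathbb{A}_i$, output attributes $\mathrm{head}(Q)=\mathbf{A}$, $\mathrm{head}(R_i)=\mathrm{head}(Q)\cap\mathrm{attr}(R_i)$. $Q$ is connected if the graph on its relations with edges between relations sharing an attribute is connected. A free sequence of $Q$ is a sequence of attributes $\langle A_1,\ldots,A_k\rangle$ with $A_1,A_k\in\mathrm{head}(Q)$, $A_2,\ldots,A_{k-1}\in\mathrm{attr}(Q)\setminus\mathrm{head}(Q)$, such that for every $i\in[k-1]$ some relation contains $A_i,A_{i+1}$, and no relation contains both $A_1$ and $A_k$. The graph $H_Q$ has the non-output attributes as vertices and an edge between two of them if some relation contains both; if $H_1,\ldots,H_k$ are its connected components, the renamed query $Q'$ has the same output attributes as $Q$, fresh attributes $F_1,\ldots,F_k$, and for each $R_i$ a relation $R_i'$ with $\mathrm{attr}(R_i')=\mathrm{head}(R_i)\cup\{F_j: H_j\cap\mathrm{attr}(R_i)\neq\emptyset\}$. In a CQ $Q''$, a nested clique is a set $P\subseteq\mathrm{attr}(Q'')$ such that each pair of attributes of $P$ occurs together in some relation; $P\cap\mathrm{head}(Q'')\neq\emptyset$ and $P\setminus\mathrm{head}(Q'')\neq\emptyset$;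 and no relation $R_j$ of $Q''$ satisfies $P\cap\mathrm{head}(Q'')\subseteq\mathrm{head}(R_j)$. $G^\exists_Q$ has as vertices the relations with $\mathrm{attr}(R_i)\setminus\mathrm{head}(Q)\neq\emptyset$ and an edge between $R_i,R_j$ if $(\mathrm{attr}(R_i)\cap\mathrm{attr}(R_j))\setminus\mathrm{head}(Q)\neq\emptyset$. A relation $R_i$ is dominant for a set $E$ of relations if $\bigcup_{R_j\in E}\mathrm{head}(R_j)\subseteq\mathrm{head}(R_i)$. $Q$ has the head-domination property if for every connected component $E$ of $G^\exists_Q$ some relation of $Q$ is dominant for $E$. *)

theory Defs
  imports Main
begin

text \<open>A conjunctive query without self-joins is given by a finite nonempty set Rs of
  (pairwise distinct) relation symbols, the attribute set att R of each relation,
  and the set H of output attributes.\<close>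

definition attrQ :: "'r set \<Rightarrow> ('r \<Rightarrow> 'a set) \<Rightarrow> 'a set" where
  "attrQ Rs att = (\<Union>R\<in>Rs. att R)"

definition is_cq :: "'r set \<Rightarrow> ('r \<Rightarrow> 'a set) \<Rightarrow> 'a set \<Rightarrow> bool" where
  "is_cq Rs att H \<longleftrightarrow> finite Rs \<and> Rs \<noteq> {} \<and> (\<forall>R\<in>Rs. finite (att R)) \<and> H \<subseteq> attrQ Rs att"

definition headR :: "('r \<Rightarrow> 'a set) \<Rightarrow> 'a set \<Rightarrow> 'r \<Rightarrow> 'a set" where
  "headR att H R = H \<inter> att R"

definition components :: "'v set \<Rightarrow> ('v \<Rightarrow> 'v \<Rightarrow> bool) \<Rightarrow> 'v set set" where
  "components V E =
     {{y \<in> V. (\<lambda>u w. u \<in> V \<and> w \<in> V \<and> E u w)\<^sup>*\<^sup>* x y} | x. x \<in> V}"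

definition graph_connected :: "'v set \<Rightarrow> ('v \<Rightarrow> 'v \<Rightarrow> bool) \<Rightarrow> bool" where
  "graph_connected V E \<longleftrightarrow>
     (\<forall>x\<in>V. \<forall>y\<in>V. (\<lambda>u w. u \<in> V \<and> w \<in> V \<and> E u w)\<^sup>*\<^sup>* x y)"

definition cq_connected :: "'r set \<Rightarrow> ('r \<Rightarrow> 'a set) \<Rightarrow> bool" where
  "cq_connected Rs att \<longleftrightarrow> graph_connected Rs (\<lambda>R S. att R \<inter> att S \<noteq> {})"

definition free_sequence :: "'r set \<Rightarrow> ('r \<Rightarrow> 'a set) \<Rightarrow> 'a set \<Rightarrow> 'a list \<Rightarrow> bool" where
  "free_sequence Rs att H as \<longleftrightarrow>
     as \<noteq> [] \<and> as ! 0 \<in> H \<and> last as \<in> H \<and>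
     (\<forall>i. 0 < i \<and> i < length as - 1 \<longrightarrow> as ! i \<in> attrQ Rs att - H) \<and>
     (\<forall>i. i < length as - 1 \<longrightarrow> (\<exists>R\<in>Rs. as ! i \<in> att R \<and> as ! Suc i \<in> att R)) \<and>
     \<not> (\<exists>R\<in>Rs. as ! 0 \<in> att R \<and> last as \<in> att R)"

definition HQ_components :: "'r set \<Rightarrow> ('r \<Rightarrow> 'a set) \<Rightarrow> 'a set \<Rightarrow> 'a set set" where
  "HQ_components Rs att H =
     components (attrQ Rs att - H) (\<lambda>A B. \<exists>R\<in>Rs. A \<in> att R \<and> B \<in> att R)"

text \<open>The renamed query Q': same relation symbols, output attributes Inl A for A in H,
  and one fresh attribute Inr C for every connected component C of H_Q.\<close>
definition renamed_att :: "'r set \<Rightarrow> ('r \<Rightarrow> 'a set) \<Rightarrow> 'a set \<Rightarrow> 'r \<Rightarrow> ('a + 'a set) set" where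
  "renamed_att Rs att H R =
     Inl ` headR att H R \<union> Inr ` {C \<in> HQ_components Rs att H. C \<inter> att R \<noteq> {}}"

definition renamed_head :: "'a set \<Rightarrow> ('a + 'a set) set" where
  "renamed_head H = Inl ` H"

definition nested_clique :: "'r set \<Rightarrow> ('r \<Rightarrow> 'b set) \<Rightarrow> 'b set \<Rightarrow> 'b set \<Rightarrow> bool" where
  "nested_clique Rs att H P \<longleftrightarrow>
     P \<subseteq> attrQ Rs att \<and>
     (\<forall>x\<in>P. \<forall>y\<in>P. \<exists>R\<in>Rs. x \<in> att R \<and> y \<in> att R) \<and>
     P \<inter> H \<noteq> {} \<and> P - H \<noteq> {} \<and>
     \<not> (\<exists>R\<in>Rs. P \<inter> H \<subseteq> headR att H R)"

definition G_exists_components :: "'r set \<Rightarrow> ('r \<Rightarrow> 'a set) \<Rightarrow> 'a set \<Rightarrow> 'r set set" where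
  "G_exists_components Rs att H =
     components {R \<in> Rs. att R - H \<noteq> {}} (\<lambda>R S. (att R \<inter> att S) - H \<noteq> {})"

definition dominant :: "('r \<Rightarrow> 'a set) \<Rightarrow> 'a set \<Rightarrow> 'r \<Rightarrow> 'r set \<Rightarrow> bool" where
  "dominant att H R E \<longleftrightarrow> (\<Union>S\<in>E. headR att H S) \<subseteq> headR att H R"

definition head_domination :: "'r set \<Rightarrow> ('r \<Rightarrow> 'a set) \<Rightarrow> 'a set \<Rightarrow> bool" where
  "head_domination Rs att H \<longleftrightarrow>
     (\<forall>E\<in>G_exists_components Rs att H. \<exists>R\<in>Rs. dominant att H R E)"

end

theory Submission
  imports Defs
begin

text \<open>Fix a component E of the graph on relations with existential attributes, and let X be the
  set of output attributes of its relations. All existential attributes of E lie in one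
  component C of H_Q. Any two attributes of X co-occur in a relation: otherwise a path through C
  would link them to a free sequence. Hence X together with the fresh attribute of C is a clique
  of the renamed query, and as it cannot be a nested clique, some relation contains all of X.\<close>

abbreviation cooccur :: "'r set \<Rightarrow> ('r \<Rightarrow> 'a set) \<Rightarrow> 'a \<Rightarrow> 'a \<Rightarrow> bool" where
  "cooccur Rs att A B \<equiv> \<exists>R\<in>Rs. A \<in> att R \<and> B \<in> att R"

abbreviation induced_edges :: "'v set \<Rightarrow> ('v \<Rightarrow> 'v \<Rightarrow> bool) \<Rightarrow> 'v \<Rightarrow> 'v \<Rightarrow> bool" where
  "induced_edges V E u w \<equiv> u \<in> V \<and> w \<in> V \<and> E u w"

lemma components_iff:
  "C \<in> components V E \<longleftrightarrow> (\<exists>x\<in>V. C = {y \<in> V. (induced_edges V E)\<^sup>*\<^sup>* x y})"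
  unfolding components_def by blast

lemma component_subset: "C \<in> components V E \<Longrightarrow> C \<subseteq> V"
  unfolding components_iff by blast

lemma component_nonempty: "C \<in> components V E \<Longrightarrow> C \<noteq> {}"
  unfolding components_iff by blast

lemma same_component_reachable:
  assumes sym: "\<And>u w. E u w \<Longrightarrow> E w u"
    and "C \<in> components V E" "a \<in> C" "b \<in> C"
  shows "(induced_edges V E)\<^sup>*\<^sup>* a b"
proof -
  obtain x where "C = {y \<in> V. (induced_edges V E)\<^sup>*\<^sup>* x y}"
    using assms(2) unfolding components_iff by blast
  then have "(induced_edges V E)\<^sup>*\<^sup>* x a" "(induced_edges V E)\<^sup>*\<^sup>* x b"
    using assms(3,4) by auto
  moreover have "symp (induced_edges V E)\<^sup>*\<^sup>*"
    using sym by (auto intro: symp_rtranclp sympI)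
  ultimately show ?thesis
    by (meson rtranclp_trans sympD)
qed

lemma induced_reachable_path:
  assumes "(induced_edges V E)\<^sup>*\<^sup>* a b" "a \<in> V"
  shows "\<exists>ws. ws \<noteq> [] \<and> hd ws = a \<and> last ws = b \<and> set ws \<subseteq> V \<and> successively E ws"
  using assms
proof (induction rule: rtranclp_induct)
  case base
  then show ?case by (intro exI[of _ "[a]"]) simp
next
  case (step u w)
  then obtain ws where "ws \<noteq> []" "hd ws = a" "last ws = u" "set ws \<subseteq> V" "successively E ws"
    by blast
  with step.hyps(2) show ?case
    by (intro exI[of _ "ws @ [w]"]) (auto simp: successively_append_iff)
qed

lemma free_sequenceI:
  assumes "x \<in> H" "y \<in> H" "set ws \<subseteq> attrQ Rs att - H"
    and "successively (cooccur Rs att) (x # ws @ [y])"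
    and "\<not> cooccur Rs att x y"
  shows "free_sequence Rs att H (x # ws @ [y])"
  unfolding free_sequence_def
proof (intro conjI allI impI)
  fix i assume "0 < i \<and> i < length (x # ws @ [y]) - 1"
  then obtain j where "i = Suc j" "j < length ws"
    by (cases i) auto
  then show "(x # ws @ [y]) ! i \<in> attrQ Rs att - H"
    using assms(3) nth_mem by (fastforce simp: nth_append)
next
  fix i assume "i < length (x # ws @ [y]) - 1"
  then show "cooccur Rs att ((x # ws @ [y]) ! i) ((x # ws @ [y]) ! Suc i)"
    using assms(4) by (simp add: successively_conv_nth)
qed (use assms(1,2,5) in auto)

lemma HQ_component_heads_cooccur:
  assumes no_free: "\<not> (\<exists>as. free_sequence Rs att H as)"
    and C: "C \<in> HQ_components Rs att H"
    and R: "R \<in> Rs" "x \<in> H \<inter> att R" "a \<in> C \<inter> att R"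
    and S: "S \<in> Rs" "y \<in> H \<inter> att S" "b \<in> C \<inter> att S"
  shows "cooccur Rs att x y"
proof (rule ccontr)
  assume not_co: "\<not> cooccur Rs att x y"
  let ?V = "attrQ Rs att - H"
  have "C \<subseteq> ?V"
    using C unfolding HQ_components_def by (rule component_subset)
  have reach: "(induced_edges ?V (cooccur Rs att))\<^sup>*\<^sup>* a b"
    using C R(3) S(3) unfolding HQ_components_def
    by (intro same_component_reachable) blast+
  have "a \<in> ?V"
    using \<open>C \<subseteq> ?V\<close> R(3) by blast
  from induced_reachable_path[OF reach this] obtain ws where ws: "ws \<noteq> []" "hd ws = a" "last ws = b"
      "set ws \<subseteq> ?V" "successively (cooccur Rs att) ws"
    by blast
  have "successively (cooccur Rs att) (x # ws @ [y])"
    using ws R S by (auto simp: successively_Cons successively_append_iff)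
  moreover have "x \<in> H" "y \<in> H"
    using R(2) S(2) by blast+
  ultimately have "free_sequence Rs att H (x # ws @ [y])"
    using free_sequenceI[OF _ _ ws(4) _ not_co] by blast
  with no_free show False by blast
qed

lemma G_exists_component_within_HQ_component:
  assumes "E \<in> G_exists_components Rs att H"
  obtains C where "C \<in> HQ_components Rs att H" "\<And>S. S \<in> E \<Longrightarrow> att S - H \<subseteq> C"
proof -
  let ?V = "attrQ Rs att - H"
  let ?hq = "induced_edges ?V (cooccur Rs att)"
  let ?g = "induced_edges {R \<in> Rs. att R - H \<noteq> {}} (\<lambda>R S. att R \<inter> att S - H \<noteq> {})"
  obtain R0 where R0: "R0 \<in> Rs" "att R0 - H \<noteq> {}"
    and E: "E = {S \<in> Rs. att S - H \<noteq> {} \<and> ?g\<^sup>*\<^sup>* R0 S}"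
    using assms unfolding G_exists_components_def components_iff by auto
  then obtain a0 where a0: "a0 \<in> att R0 - H" by blast
  have a0_V: "a0 \<in> ?V"
    using a0 R0(1) unfolding attrQ_def by blast
  have "att S - H \<subseteq> {b \<in> ?V. ?hq\<^sup>*\<^sup>* a0 b}" if "?g\<^sup>*\<^sup>* R0 S" for S
    using that
  proof (induction rule: rtranclp_induct)
    case base
    show ?case
      using a0 a0_V R0(1) unfolding attrQ_def by blast
  next
    case (step S T)
    then obtain c where c: "c \<in> att S \<inter> att T - H" and "T \<in> Rs"
      by blast
    with step.IH have "?hq\<^sup>*\<^sup>* a0 c" "c \<in> ?V"
      by blast+
    with c \<open>T \<in> Rs\<close> show ?case
      unfolding attrQ_def by (blast intro: rtranclp.rtrancl_into_rtrancl)
  qed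
  moreover have "{b \<in> ?V. ?hq\<^sup>*\<^sup>* a0 b} \<in> HQ_components Rs att H"
    using a0_V unfolding HQ_components_def components_iff by blast
  ultimately show thesis
    using that E by blast
qed

lemma renamed_nested_clique:
  assumes C: "C \<in> HQ_components Rs att H"
    and X: "X \<subseteq> H" "X \<noteq> {}"
    and clique: "\<And>x y. x \<in> X \<Longrightarrow> y \<in> X \<Longrightarrow> cooccur Rs att x y"
    and meets_C: "\<And>x. x \<in> X \<Longrightarrow> \<exists>R\<in>Rs. x \<in> att R \<and> C \<inter> att R \<noteq> {}"
    and not_covered: "\<not> (\<exists>R\<in>Rs. X \<subseteq> att R)"
  shows "nested_clique Rs (renamed_att Rs att H) (renamed_head H) (Inl ` X \<union> {Inr C})"
proof -
  let ?att' = "renamed_att Rs att H"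
  have Inl_iff: "Inl x \<in> ?att' R \<longleftrightarrow> x \<in> H \<inter> att R" for x R
    unfolding renamed_att_def headR_def by auto
  have Inr_C: "Inr C \<in> ?att' R \<longleftrightarrow> C \<inter> att R \<noteq> {}" for R
    using C unfolding renamed_att_def by auto
  obtain x0 where "x0 \<in> X"
    using X(2) by blast
  then obtain R0 where R0: "R0 \<in> Rs" "Inr C \<in> ?att' R0"
    using meets_C Inr_C by blast
  have Inl_Inl: "cooccur Rs ?att' (Inl x) (Inl y)" if "x \<in> X" "y \<in> X" for x y
    using clique[OF that] that X(1) Inl_iff by blast
  have Inl_Inr: "cooccur Rs ?att' (Inl x) (Inr C)" if "x \<in> X" for x
    using meets_C[OF that] that X(1) Inl_iff Inr_C by blast
  have "cooccur Rs ?att' p q" if "p \<in> Inl ` X \<union> {Inr C}" "q \<in> Inl ` X \<union> {Inr C}" for p q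
    using that R0 Inl_Inl Inl_Inr by blast
  moreover have "Inl ` X \<union> {Inr C} \<subseteq> attrQ Rs ?att'"
    using calculation unfolding attrQ_def by blast
  moreover have "(Inl ` X \<union> {Inr C}) \<inter> renamed_head H = Inl ` X"
    using X(1) unfolding renamed_head_def by auto
  moreover have "Inl ` X \<subseteq> headR ?att' (renamed_head H) R \<longleftrightarrow> X \<subseteq> att R" for R
    using X(1) unfolding headR_def renamed_head_def by (auto simp: Inl_iff)
  ultimately show ?thesis
    using X(2) not_covered unfolding nested_clique_def renamed_head_def by auto
qed

lemma G_exists_component_heads_cooccur:
  assumes no_free: "\<not> (\<exists>as. free_sequence Rs att H as)"
    and E: "E \<in> G_exists_components Rs att H"
    and X: "X = (\<Union>S\<in>E. headR att H S)"
  obtains C where "C \<in> HQ_components Rs att H"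
    and "\<And>x. x \<in> X \<Longrightarrow> \<exists>R\<in>Rs. x \<in> att R \<and> C \<inter> att R \<noteq> {}"
    and "\<And>x y. x \<in> X \<Longrightarrow> y \<in> X \<Longrightarrow> cooccur Rs att x y"
proof -
  obtain C where C: "C \<in> HQ_components Rs att H" and nonhead_in_C: "\<And>S. S \<in> E \<Longrightarrow> att S - H \<subseteq> C"
    using G_exists_component_within_HQ_component[OF E] by blast
  have E_sub: "E \<subseteq> {R \<in> Rs. att R - H \<noteq> {}}"
    using E component_subset unfolding G_exists_components_def by blast
  have head_meets_C: "\<exists>R\<in>E. x \<in> H \<inter> att R \<and> C \<inter> att R \<noteq> {}" if "x \<in> X" for x
    using that nonhead_in_C E_sub unfolding X headR_def by blast
  have "cooccur Rs att x y" if "x \<in> X" "y \<in> X" for x y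
  proof -
    obtain R a where "R \<in> E" "x \<in> H \<inter> att R" "a \<in> C \<inter> att R"
      using head_meets_C[OF \<open>x \<in> X\<close>] by blast
    moreover obtain S b where "S \<in> E" "y \<in> H \<inter> att S" "b \<in> C \<inter> att S"
      using head_meets_C[OF \<open>y \<in> X\<close>] by blast
    ultimately show ?thesis
      using HQ_component_heads_cooccur[OF no_free C] E_sub by blast
  qed
  moreover have "\<exists>R\<in>Rs. x \<in> att R \<and> C \<inter> att R \<noteq> {}" if "x \<in> X" for x
    using head_meets_C[OF that] E_sub by blast
  ultimately show thesis
    using that C by blast
qed

theorem lemma29:
  fixes Rs :: "'r set" and att :: "'r \<Rightarrow> 'a set" and H :: "'a set"
  assumes "is_cq Rs att H"
    and "cq_connected Rs att"
    and "\<not> (\<exists>as. free_sequence Rs att H as)"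
    and "\<not> (\<exists>P. nested_clique Rs (renamed_att Rs att H) (renamed_head H) P)"
  shows "head_domination Rs att H"
  unfolding head_domination_def
proof
  fix E assume E: "E \<in> G_exists_components Rs att H"
  define X where "X = (\<Union>S\<in>E. headR att H S)"
  have "X \<subseteq> H"
    unfolding X_def headR_def by blast
  have "\<exists>R\<in>Rs. X \<subseteq> att R"
  proof (cases "X = {}")
    case True
    have "E \<noteq> {}" "E \<subseteq> Rs"
      using E component_nonempty component_subset unfolding G_exists_components_def by blast+
    with True show ?thesis
      by blast
  next
    case False
    obtain C where C: "C \<in> HQ_components Rs att H"
      and meets_C: "\<And>x. x \<in> X \<Longrightarrow> \<exists>R\<in>Rs. x \<in> att R \<and> C \<inter> att R \<noteq> {}"
      and clique: "\<And>x y. x \<in> X \<Longrightarrow> y \<in> X \<Longrightarrow> cooccur Rs att x y"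
      using G_exists_component_heads_cooccur[OF assms(3) E X_def] by blast
    have "nested_clique Rs (renamed_att Rs att H) (renamed_head H) (Inl ` X \<union> {Inr C})"
      if "\<not> (\<exists>R\<in>Rs. X \<subseteq> att R)"
      using renamed_nested_clique[OF C \<open>X \<subseteq> H\<close> False clique meets_C that] .
    with assms(4) show ?thesis
      by blast
  qed
  then show "\<exists>R\<in>Rs. dominant att H R E"
    using \<open>X \<subseteq> H\<close> unfolding dominant_def X_def headR_def by blast
qed

end
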